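(* Let $f:[0,1]\times\mathbb{R}^4\to\mathbb{R}$ be continuous, and suppose there exists a constant $M>0$ such that $$|f(x,u,y,v,z)|\le \frac{M}{2}\quad\text{for all }(x,u,y,v,z)\in\mathcal{D}_M,$$ where $$\mathcal{D}_M=\Big\{(x,u,y,v,z)\;:\;0\le x\le 1,\ |u|\le \tfrac{M}{384},\ |y|\le \tfrac{M}{72\sqrt3},\ |v|\le M,\ |z|\le M\Big\}.$$ Then the boundary value problem $$u^{(4)}(x)=f(x,u(x),u'(x),u''(x),u'''(x)),\quad 0<x<1,\qquad u(0)=u(1)=0,\quad u'(0)=u'(1)=0,$$ has at least one solution.
   Context: A solution means a function $u\in C^4[0,1]$ satisfying the differential equation on $(0,1)$ and the four boundary conditions. *)

theory Defs
  imports "HOL-Analysis.Analysis"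
begin

definition C4_with_derivs ::
  "(real \<Rightarrow> real) \<Rightarrow> (real \<Rightarrow> real) \<Rightarrow> (real \<Rightarrow> real) \<Rightarrow> (real \<Rightarrow> real) \<Rightarrow> (real \<Rightarrow> real) \<Rightarrow> bool"
  where "C4_with_derivs u u1 u2 u3 u4 \<longleftrightarrow>
    (\<forall>x\<in>{0..1}. (u has_real_derivative u1 x) (at x within {0..1}) \<and>
                 (u1 has_real_derivative u2 x) (at x within {0..1}) \<and>
                 (u2 has_real_derivative u3 x) (at x within {0..1}) \<and>
                 (u3 has_real_derivative u4 x) (at x within {0..1})) \<and>
    continuous_on {0..1} u4"

definition D_M :: "real \<Rightarrow> (real \<times> real \<times> real \<times> real \<times> real) set" where
  "D_M M = {(x,u,y,v,z). 0 \<le> x \<and> x \<le> 1 \<and> \<bar>u\<bar> \<le> M / 384 \<and>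
              \<bar>y\<bar> \<le> M / (72 * sqrt 3) \<and> \<bar>v\<bar> \<le> M \<and> \<bar>z\<bar> \<le> M}"

end

theory Submission
  imports Defs
begin

text \<open>Clamping the arguments of \<open>f\<close> into the box \<open>D_M M\<close> produces a bounded, uniformly
  continuous right-hand side \<open>F\<close>. For any solution of the clamped beam problem with
  \<open>\<bar>u''''\<bar> \<le> M/2\<close>, a Rolle argument for the Hermite remainder gives \<open>\<bar>u\<bar> \<le> M/384\<close>, an
  energy identity together with the arithmetic-geometric mean inequality gives
  \<open>\<bar>u'\<bar> \<le> M/(72 \<surd>3)\<close>, and repeated Rolle and mean value arguments give
  \<open>\<bar>u''\<bar>, \<bar>u'''\<bar> \<le> M\<close>; so such solutions stay in the box, where \<open>F = f\<close>.

  A solution for \<open>F\<close> is a uniform limit of approximate solutions: the forcing is discretised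
  causally by piecewise linear functions, the free data \<open>u''(0)\<close> and \<open>u'''(0)\<close> are fixed by
  Brouwer's theorem in the plane so that \<open>u(1) = u'(1) = 0\<close>, and the equi-Lipschitz approximants
  have a uniformly convergent subsequence by the Arzela-Ascoli theorem.\<close>

section \<open>Calculus on an interval\<close>

lemma rolle_within:
  fixes f f' :: "real \<Rightarrow> real"
  assumes "a < b" and "{a..b} \<subseteq> S"
    and "\<And>x. x \<in> {a..b} \<Longrightarrow> (f has_real_derivative f' x) (at x within S)"
    and "f a = f b"
  shows "\<exists>z\<in>{a<..<b}. f' z = 0"
proof -
  have "(f has_real_derivative f' x) (at x within {a..b})" if "a \<le> x" "x \<le> b" for x
    using assms(2,3) that by (auto intro: DERIV_subset)
  then have "(f has_derivative (*) (f' x)) (at x within {a..b})" if "a \<le> x" "x \<le> b" for x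
    using that by (simp add: has_field_derivative_def)
  from mvt_simple[OF assms(1) this] obtain z where "z \<in> {a<..<b}" "f b - f a = (b - a) * f' z"
    by auto
  then show ?thesis using assms(1,4) by auto
qed

lemma bounded_real_derivative_imp_lipschitz:
  fixes f f' :: "real \<Rightarrow> real"
  assumes "\<And>x. x \<in> S \<Longrightarrow> (f has_real_derivative f' x) (at x within S)" and "convex S"
    and "\<And>x. x \<in> S \<Longrightarrow> \<bar>f' x\<bar> \<le> C" and "0 \<le> C"
  shows "C-lipschitz_on S f"
proof (rule bounded_derivative_imp_lipschitz[OF _ assms(2) _ assms(4)])
  fix x assume "x \<in> S"
  then show "(f has_derivative (*) (f' x)) (at x within S)"
    using assms(1) by (simp add: has_field_derivative_def)
  have "(*\<^sub>R) (f' x) = (*) (f' x)" by (simp add: fun_eq_iff)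
  then have "onorm ((*) (f' x)) = \<bar>f' x\<bar>"
    using onorm_scaleR[where f="\<lambda>h::real. h" and r="f' x", OF bounded_linear_ident] onorm_id[where 'a=real] by simp
  then show "onorm ((*) (f' x)) \<le> C" using assms(3) \<open>x \<in> S\<close> by simp
qed

lemma fundamental_theorem_of_calculus_within:
  fixes F f :: "real \<Rightarrow> real"
  assumes "a \<le> b" and "{a..b} \<subseteq> S"
    and "\<And>x. x \<in> {a..b} \<Longrightarrow> (F has_real_derivative f x) (at x within S)"
  shows "(f has_integral (F b - F a)) {a..b}"
proof (rule fundamental_theorem_of_calculus[OF assms(1)])
  fix x assume "x \<in> {a..b}"
  then show "(F has_vector_derivative f x) (at x within {a..b})"
    using assms(2,3) by (auto intro: DERIV_subset simp: has_real_derivative_iff_has_vector_derivative[symmetric])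
qed

lemma abs_integral_mult_le_amgm:
  fixes f g :: "real \<Rightarrow> real"
  assumes "continuous_on {a..b} f" "continuous_on {a..b} g" "t > 0"
  shows "\<bar>integral {a..b} (\<lambda>s. f s * g s)\<bar> \<le>
     t/2 * integral {a..b} (\<lambda>s. (f s)^2) + 1/(2*t) * integral {a..b} (\<lambda>s. (g s)^2)"
proof -
  define G where "G s = t/2 * (f s)^2 + 1/(2*t) * (g s)^2" for s
  have fg: "(\<lambda>s. f s * g s) integrable_on {a..b}" and iG: "G integrable_on {a..b}"
    unfolding G_def by (intro integrable_continuous_interval continuous_intros assms)+
  have intG: "integral {a..b} G = t/2 * integral {a..b} (\<lambda>s. (f s)^2) + 1/(2*t) * integral {a..b} (\<lambda>s. (g s)^2)"
  proof -
    have "integral {a..b} G = integral {a..b} (\<lambda>s. t/2 * (f s)^2) + integral {a..b} (\<lambda>s. 1/(2*t) * (g s)^2)"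
      unfolding G_def by (rule integral_add; intro integrable_continuous_interval continuous_intros assms)
    then show ?thesis by (simp only: integral_mult_right)
  qed
  have "\<bar>f s * g s\<bar> \<le> G s" for s
  proof -
    have "0 \<le> (t * \<bar>f s\<bar> - \<bar>g s\<bar>)^2" by simp
    then have "2 * t * \<bar>f s * g s\<bar> \<le> t^2 * (f s)^2 + (g s)^2"
      by (simp add: power2_eq_square algebra_simps abs_mult)
    then show ?thesis using assms(3) by (simp add: G_def field_simps power2_eq_square)
  qed
  then have "integral {a..b} (\<lambda>s. f s * g s) \<le> integral {a..b} G"
    and "integral {a..b} (\<lambda>s. - (f s * g s)) \<le> integral {a..b} G"
    by (intro integral_le fg integrable_neg iG; force simp: abs_le_iff)+
  then show ?thesis unfolding intG[symmetric] by (simp add: abs_le_iff)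
qed

lemma has_integral_affine_square:
  fixes c0 c1 :: real
  assumes "a \<le> b"
  shows "((\<lambda>s. (c0 + c1 * s)^2) has_integral
      ((c0^2 * b + c0 * c1 * b^2 + c1^2 * b^3 / 3) - (c0^2 * a + c0 * c1 * a^2 + c1^2 * a^3 / 3))) {a..b}"
  by (rule fundamental_theorem_of_calculus_within[OF assms order_refl])
    (rule derivative_eq_intros refl | simp add: power2_eq_square power3_eq_cube algebra_simps)+

lemma abs_le_if_vanishes:
  fixes f f' :: "real \<Rightarrow> real"
  assumes "\<And>x. x \<in> {0..1} \<Longrightarrow> (f has_real_derivative f' x) (at x within {0..1})"
    and "\<And>x. x \<in> {0..1} \<Longrightarrow> \<bar>f' x\<bar> \<le> C"
    and "y \<in> {0..1}" "f y = 0" "x \<in> {0..1}"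
  shows "\<bar>f x\<bar> \<le> C"
proof -
  have "0 \<le> C" using assms(2)[of 0] by simp
  then have "C-lipschitz_on {0..1} f"
    using assms(1,2) by (intro bounded_real_derivative_imp_lipschitz) auto
  then have "\<bar>f x - f y\<bar> \<le> C * \<bar>x - y\<bar>"
    using assms(3,5) by (auto dest: lipschitz_onD simp: dist_real_def)
  also have "\<dots> \<le> C" using \<open>0 \<le> C\<close> assms(3,5) by (intro mult_left_le) auto
  finally show ?thesis using assms(4) by simp
qed

section \<open>A priori bounds for the clamped beam\<close>

locale clamped_beam =
  fixes u u1 u2 u3 u4 :: "real \<Rightarrow> real"
  assumes deriv0: "\<And>x. x \<in> {0..1} \<Longrightarrow> (u has_real_derivative u1 x) (at x within {0..1})"
    and deriv1: "\<And>x. x \<in> {0..1} \<Longrightarrow> (u1 has_real_derivative u2 x) (at x within {0..1})"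
    and deriv2: "\<And>x. x \<in> {0..1} \<Longrightarrow> (u2 has_real_derivative u3 x) (at x within {0..1})"
    and deriv3: "\<And>x. x \<in> {0..1} \<Longrightarrow> (u3 has_real_derivative u4 x) (at x within {0..1})"
    and boundary: "u 0 = 0" "u 1 = 0" "u1 0 = 0" "u1 1 = 0"
begin

lemma continuous_on_derivs:
  "continuous_on {0..1} u" "continuous_on {0..1} u1" "continuous_on {0..1} u2" "continuous_on {0..1} u3"
  by (rule DERIV_continuous_on, erule deriv0 deriv1 deriv2 deriv3)+

lemma exists_fourth_deriv_zero:
  assumes x: "x \<in> {0<..<1}" and "u x = 0"
  shows "\<exists>t\<in>{0..1}. u4 t = 0"
proof -
  have x0: "0 < x" and x1: "x < 1" using x by auto
  obtain a1 where a1: "a1 \<in> {0<..<x}" "u1 a1 = 0"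
    using rolle_within[where a=0 and b=x and S="{0..1}" and f=u and f'=u1] deriv0 x0 x1 assms(2) boundary
    by auto
  obtain a2 where a2: "a2 \<in> {x<..<1}" "u1 a2 = 0"
    using rolle_within[where a=x and b=1 and S="{0..1}" and f=u and f'=u1] deriv0 x0 x1 assms(2) boundary
    by auto
  obtain b1 where b1: "b1 \<in> {0<..<a1}" "u2 b1 = 0"
    using rolle_within[where a=0 and b=a1 and S="{0..1}" and f=u1 and f'=u2] deriv1 a1 boundary x1 by auto
  obtain b2 where b2: "b2 \<in> {a1<..<a2}" "u2 b2 = 0"
    using rolle_within[where a=a1 and b=a2 and S="{0..1}" and f=u1 and f'=u2] deriv1 a1 a2 by auto
  obtain b3 where b3: "b3 \<in> {a2<..<1}" "u2 b3 = 0"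
    using rolle_within[where a=a2 and b=1 and S="{0..1}" and f=u1 and f'=u2] deriv1 a1 a2 boundary by auto
  obtain c1 where c1: "c1 \<in> {b1<..<b2}" "u3 c1 = 0"
    using rolle_within[where a=b1 and b=b2 and S="{0..1}" and f=u2 and f'=u3] deriv2 b1 b2 a1 a2 by auto
  obtain c2 where c2: "c2 \<in> {b2<..<b3}" "u3 c2 = 0"
    using rolle_within[where a=b2 and b=b3 and S="{0..1}" and f=u2 and f'=u3] deriv2 b2 b3 a1 a2 by auto
  obtain t where "t \<in> {c1<..<c2}" "u4 t = 0"
    using rolle_within[where a=c1 and b=c2 and S="{0..1}" and f=u3 and f'=u4] deriv3 c1 c2 b1 b2 b3 a1 a2
    by auto
  moreover have "t \<in> {0..1}" using calculation c1 c2 b1 b2 b3 a1 a2 by auto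
  ultimately show ?thesis by blast
qed

text \<open>The clamped function \<open>u - c p\<close>, with \<open>p s = s\<^sup>2 (1 - s)\<^sup>2\<close> and \<open>c\<close> chosen to make it vanish
  at \<open>x\<close>, has fourth derivative \<open>u4 - 24 c\<close>.\<close>

lemma abs_le_hermite_remainder:
  assumes bound: "\<And>x. x \<in> {0..1} \<Longrightarrow> \<bar>u4 x\<bar> \<le> K" and x: "x \<in> {0..1}"
  shows "\<bar>u x\<bar> \<le> K * (x^2 * (1-x)^2) / 24"
proof (cases "x = 0 \<or> x = 1")
  case True
  have "0 \<le> K" using bound[of 0] by simp
  then show ?thesis using True boundary by auto
next
  case False
  then have x01: "x \<in> {0<..<1}" using x by auto
  define p where "p s = s^2 * (1-s)^2" for s :: real
  have px: "p x > 0" using x01 by (simp add: p_def)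
  define c where "c = u x / p x"
  have beam: "clamped_beam (\<lambda>s. u s - c * p s) (\<lambda>s. u1 s - c * (2 * s - 6 * s ^ 2 + 4 * s ^ 3))
      (\<lambda>s. u2 s - c * (2 - 12 * s + 12 * s ^ 2)) (\<lambda>s. u3 s - c * (24 * s - 12)) (\<lambda>s. u4 s - c * 24)"
  proof
    fix s :: real assume s: "s \<in> {0..1}"
    show "((\<lambda>s. u s - c * p s) has_real_derivative u1 s - c * (2 * s - 6 * s ^ 2 + 4 * s ^ 3))
        (at s within {0..1})"
      unfolding p_def
      by (rule derivative_eq_intros deriv0[OF s] refl | simp add: algebra_simps power2_eq_square power3_eq_cube)+
    show "((\<lambda>s. u1 s - c * (2 * s - 6 * s ^ 2 + 4 * s ^ 3)) has_real_derivative
        u2 s - c * (2 - 12 * s + 12 * s ^ 2)) (at s within {0..1})"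
      by (rule derivative_eq_intros deriv1[OF s] refl | simp add: algebra_simps power2_eq_square power3_eq_cube)+
    show "((\<lambda>s. u2 s - c * (2 - 12 * s + 12 * s ^ 2)) has_real_derivative u3 s - c * (24 * s - 12))
        (at s within {0..1})"
      by (rule derivative_eq_intros deriv2[OF s] refl | simp add: algebra_simps power2_eq_square)+
    show "((\<lambda>s. u3 s - c * (24 * s - 12)) has_real_derivative u4 s - c * 24) (at s within {0..1})"
      by (rule derivative_eq_intros deriv3[OF s] refl | simp)+
  qed (use boundary in \<open>simp_all add: p_def\<close>)
  moreover have "u x - c * p x = 0" using px by (simp add: c_def)
  ultimately obtain t where "t \<in> {0..1}" "u4 t - c * 24 = 0"
    using clamped_beam.exists_fourth_deriv_zero[OF beam x01] by blast
  then have "\<bar>c\<bar> \<le> K / 24" using bound[of t] by simp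
  then have "\<bar>c\<bar> * p x \<le> K / 24 * p x" using px by (intro mult_right_mono) auto
  moreover have "u x = c * p x" using px by (simp add: c_def)
  ultimately show ?thesis by (simp add: abs_mult p_def)
qed

lemma integral_u2_square_eq:
  assumes "continuous_on {0..1} u4"
  shows "integral {0..1} (\<lambda>s. (u2 s)^2) = integral {0..1} (\<lambda>s. u s * u4 s)"
proof -
  note c = continuous_on_derivs assms
  have "((\<lambda>s. u2 s * u2 s + u1 s * u3 s) has_integral (u1 1 * u2 1 - u1 0 * u2 0)) {0..1}"
    by (rule fundamental_theorem_of_calculus_within[where F="\<lambda>s. u1 s * u2 s"])
      (auto intro!: derivative_eq_intros deriv1 deriv2)
  moreover have "((\<lambda>s. u1 s * u3 s + u s * u4 s) has_integral (u 1 * u3 1 - u 0 * u3 0)) {0..1}"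
    by (rule fundamental_theorem_of_calculus_within[where F="\<lambda>s. u s * u3 s"])
      (auto intro!: derivative_eq_intros deriv0 deriv3)
  moreover have "(\<lambda>s. u2 s * u2 s) integrable_on {0..1}" "(\<lambda>s. u1 s * u3 s) integrable_on {0..1}"
    "(\<lambda>s. u s * u4 s) integrable_on {0..1}"
    by (intro integrable_continuous_interval continuous_intros c)+
  ultimately have "integral {0..1} (\<lambda>s. u2 s * u2 s) + integral {0..1} (\<lambda>s. u1 s * u3 s) = 0"
    "integral {0..1} (\<lambda>s. u1 s * u3 s) + integral {0..1} (\<lambda>s. u s * u4 s) = 0"
    using boundary by (simp_all add: integral_add[symmetric] integral_unique)
  then show ?thesis by (simp add: power2_eq_square)
qed

lemma integral_u2_square_le:
  assumes "continuous_on {0..1} u4" and bound: "\<And>x. x \<in> {0..1} \<Longrightarrow> \<bar>u4 x\<bar> \<le> K"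
  shows "integral {0..1} (\<lambda>s. (u2 s)^2) \<le> K^2 / 720"
proof -
  have K: "0 \<le> K" using bound[of 0] by simp
  have "((\<lambda>s. K^2 / 24 * (s^2 * (1-s)^2)) has_integral
      ((\<lambda>s. K^2 / 24 * (s^3/3 - s^4/2 + s^5/5)) 1 - (\<lambda>s. K^2 / 24 * (s^3/3 - s^4/2 + s^5/5)) 0)) {0..1}"
    by (rule fundamental_theorem_of_calculus_within[OF _ order_refl])
      (auto intro!: derivative_eq_intros simp: eval_nat_numeral algebra_simps)
  then have hp: "((\<lambda>s. K^2 / 24 * (s^2 * (1-s)^2)) has_integral K^2 / 720) {0..1}"
    by simp
  have "integral {0..1} (\<lambda>s. u s * u4 s) \<le> integral {0..1} (\<lambda>s. K^2 / 24 * (s^2 * (1-s)^2))"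
  proof (rule integral_le)
    show "(\<lambda>s. u s * u4 s) integrable_on {0..1}"
      by (intro integrable_continuous_interval continuous_intros continuous_on_derivs assms(1))
    show "(\<lambda>s. K^2 / 24 * (s^2 * (1-s)^2)) integrable_on {0..1}" using hp by blast
    fix s :: real assume s: "s \<in> {0..1}"
    have "u s * u4 s \<le> \<bar>u s\<bar> * \<bar>u4 s\<bar>" by (simp add: abs_mult[symmetric])
    also have "\<dots> \<le> (K * (s^2 * (1-s)^2) / 24) * K"
      by (rule mult_mono[OF abs_le_hermite_remainder[OF bound s] bound[OF s]]) (use K in auto)
    finally show "u s * u4 s \<le> K^2 / 24 * (s^2 * (1-s)^2)" by (simp add: power2_eq_square field_simps)
  qed
  then show ?thesis using integral_unique[OF hp] integral_u2_square_eq[OF assms(1)] by linarith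
qed

text \<open>Since \<open>\<integral>\<^sub>0\<^sup>1 u2 s (a + b s) ds = 0\<close> for all \<open>a\<close>, \<open>b\<close>, the value \<open>u1 x = \<integral>\<^sub>0\<^sup>x u2\<close> can be
  written against any of these kernels.\<close>

lemma u1_eq_integral_kernel:
  assumes x: "x \<in> {0..1}"
  shows "u1 x = integral {0..x} (\<lambda>s. u2 s * ((1 - a) - b * s)) + integral {x..1} (\<lambda>s. u2 s * (- a - b * s))"
proof -
  have x0: "0 \<le> x" and x1: "x \<le> 1" using x by auto
  have c2: "continuous_on {0..x} u2" "continuous_on {x..1} u2"
    using x by (auto intro: continuous_on_subset[OF continuous_on_derivs(3)])
  have "(u2 has_integral (u1 x - u1 0)) {0..x}"
    by (rule fundamental_theorem_of_calculus_within[OF x0 _ deriv1]) (use x in auto)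
  then have int_u2: "integral {0..x} u2 = u1 x" using boundary by (simp add: integral_unique)
  have int_ab: "((\<lambda>s. u2 s * (a + b * s)) has_integral
      ((u1 1 * (a + b * 1) - b * u 1) - (u1 0 * (a + b * 0) - b * u 0))) {0..1}"
    by (rule fundamental_theorem_of_calculus_within[where F="\<lambda>s. u1 s * (a + b * s) - b * u s"])
      (auto intro!: derivative_eq_intros deriv0 deriv1 simp: algebra_simps)
  have "integral {0..x} (\<lambda>s. u2 s * (a + b * s)) + integral {x..1} (\<lambda>s. u2 s * (a + b * s)) = 0"
    using Henstock_Kurzweil_Integration.integral_combine[OF x0 x1 has_integral_integrable[OF int_ab]]
      integral_unique[OF int_ab] boundary by simp
  moreover have "integral {0..x} (\<lambda>s. u2 s * ((1 - a) - b * s)) =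
      integral {0..x} u2 - integral {0..x} (\<lambda>s. u2 s * (a + b * s))"
    by (subst integral_diff[symmetric]) (auto simp: algebra_simps intro!: integrable_continuous_interval continuous_intros c2)
  moreover have "integral {x..1} (\<lambda>s. u2 s * (- a - b * s)) = - integral {x..1} (\<lambda>s. u2 s * (a + b * s))"
    by (subst integral_neg[symmetric]) (simp add: algebra_simps)
  ultimately show ?thesis using int_u2 by linarith
qed

text \<open>The kernel of \<open>u1_eq_integral_kernel\<close> with \<open>a = 4x - 3x\<^sup>2\<close>, \<open>b = 6x\<^sup>2 - 6x\<close> has squared
  \<open>L\<^sup>2\<close>-norm \<open>1/12 - 3 (x (1 - x) - 1/6)\<^sup>2\<close>; together with \<open>integral_u2_square_le\<close> and the
  arithmetic-geometric mean inequality with weight \<open>8 / K\<close> this bounds \<open>u1\<close>.\<close>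

lemma abs_u1_le:
  assumes "continuous_on {0..1} u4" and bound: "\<And>x. x \<in> {0..1} \<Longrightarrow> \<bar>u4 x\<bar> \<le> K"
    and K: "K > 0" and x: "x \<in> {0..1}"
  shows "\<bar>u1 x\<bar> \<le> 31 / 2880 * K"
proof -
  define a where "a = 4 * x - 3 * x^2"
  define b where "b = 6 * x^2 - 6 * x"
  define t where "t = 8 / K"
  have t: "t > 0" using K by (simp add: t_def)
  have x0: "0 \<le> x" and x1: "x \<le> 1" using x by auto
  have c2: "continuous_on {0..x} u2" "continuous_on {x..1} u2"
    using x by (auto intro: continuous_on_subset[OF continuous_on_derivs(3)])
  have "integral {0..x} (\<lambda>s. (u2 s)^2) + integral {x..1} (\<lambda>s. (u2 s)^2) = integral {0..1} (\<lambda>s. (u2 s)^2)"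
    by (intro Henstock_Kurzweil_Integration.integral_combine x0 x1 integrable_continuous_interval
        continuous_intros continuous_on_derivs)
  then have E: "integral {0..x} (\<lambda>s. (u2 s)^2) + integral {x..1} (\<lambda>s. (u2 s)^2) \<le> K^2 / 720"
    using integral_u2_square_le[OF assms(1) bound] by simp
  have "integral {0..x} (\<lambda>s. ((1 - a) + (- b) * s)^2) + integral {x..1} (\<lambda>s. ((- a) + (- b) * s)^2)
      = 1/12 - 3 * (x * (1 - x) - 1/6)^2"
    using integral_unique[OF has_integral_affine_square[OF x0, of "1-a" "-b"]]
      integral_unique[OF has_integral_affine_square[OF x1, of "-a" "-b"]]
    by (simp add: a_def b_def power2_eq_square power3_eq_cube field_simps)
  then have D: "integral {0..x} (\<lambda>s. ((1 - a) + (- b) * s)^2) + integral {x..1} (\<lambda>s. ((- a) + (- b) * s)^2)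
      \<le> 1/12" by simp
  have "\<bar>u1 x\<bar> \<le> \<bar>integral {0..x} (\<lambda>s. u2 s * ((1 - a) + (- b) * s))\<bar>
      + \<bar>integral {x..1} (\<lambda>s. u2 s * ((- a) + (- b) * s))\<bar>"
    using u1_eq_integral_kernel[OF x, of a b] by simp
  also have "\<dots> \<le> t/2 * (integral {0..x} (\<lambda>s. (u2 s)^2) + integral {x..1} (\<lambda>s. (u2 s)^2))
      + 1/(2*t) * (integral {0..x} (\<lambda>s. ((1 - a) + (- b) * s)^2) + integral {x..1} (\<lambda>s. ((- a) + (- b) * s)^2))"
    using abs_integral_mult_le_amgm[OF c2(1) _ t, of "\<lambda>s. (1 - a) + (- b) * s"]
      abs_integral_mult_le_amgm[OF c2(2) _ t, of "\<lambda>s. (- a) + (- b) * s"]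
    by (simp add: continuous_intros algebra_simps)
  also have "\<dots> \<le> t/2 * (K^2 / 720) + 1/(2*t) * (1/12)"
    using E D t by (intro add_mono mult_left_mono) auto
  also have "\<dots> = 31 / 2880 * K" using K by (simp add: t_def power2_eq_square field_simps)
  finally show ?thesis .
qed

lemma abs_derivs_le:
  assumes bound: "\<And>x. x \<in> {0..1} \<Longrightarrow> \<bar>u4 x\<bar> \<le> K" and x: "x \<in> {0..1}"
  shows "\<bar>u x\<bar> \<le> K" "\<bar>u1 x\<bar> \<le> K" "\<bar>u2 x\<bar> \<le> K" "\<bar>u3 x\<bar> \<le> K"
proof -
  obtain p where p: "p \<in> {0<..<1}" "u1 p = 0"
    using rolle_within[where a=0 and b=1 and S="{0..1}" and f=u and f'=u1] deriv0 boundary by auto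
  obtain q1 where q1: "q1 \<in> {0<..<p}" "u2 q1 = 0"
    using rolle_within[where a=0 and b=p and S="{0..1}" and f=u1 and f'=u2] deriv1 boundary p by auto
  obtain q2 where q2: "q2 \<in> {p<..<1}" "u2 q2 = 0"
    using rolle_within[where a=p and b=1 and S="{0..1}" and f=u1 and f'=u2] deriv1 boundary p by auto
  obtain r where r: "r \<in> {q1<..<q2}" "u3 r = 0"
    using rolle_within[where a=q1 and b=q2 and S="{0..1}" and f=u2 and f'=u3] deriv2 q1 q2 p by auto
  have b3: "\<bar>u3 y\<bar> \<le> K" if "y \<in> {0..1}" for y
    by (rule abs_le_if_vanishes[OF deriv3 bound _ r(2) that]) (use r q1 q2 in auto)
  have b2: "\<bar>u2 y\<bar> \<le> K" if "y \<in> {0..1}" for y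
    by (rule abs_le_if_vanishes[OF deriv2 b3 _ q1(2) that]) (use q1 p in auto)
  have b1: "\<bar>u1 y\<bar> \<le> K" if "y \<in> {0..1}" for y
    by (rule abs_le_if_vanishes[OF deriv1 b2 _ boundary(3) that]) auto
  show "\<bar>u x\<bar> \<le> K" by (rule abs_le_if_vanishes[OF deriv0 b1 _ boundary(1) x]) auto
  show "\<bar>u1 x\<bar> \<le> K" "\<bar>u2 x\<bar> \<le> K" "\<bar>u3 x\<bar> \<le> K" using b1 b2 b3 x by auto
qed

lemma jet_in_D_M:
  assumes "continuous_on {0..1} u4" and bound: "\<And>x. x \<in> {0..1} \<Longrightarrow> \<bar>u4 x\<bar> \<le> M / 2"
    and M: "M > 0" and x: "x \<in> {0..1}"
  shows "(x, u x, u1 x, u2 x, u3 x) \<in> D_M M"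
proof -
  have "x * (1 - x) \<le> 1/4" using zero_le_power2[of "x - 1/2"] by (simp add: power2_eq_square algebra_simps)
  then have "(x * (1 - x))^2 \<le> (1/4)^2" using x by (intro power_mono) auto
  then have "x^2 * (1-x)^2 \<le> 1/16" by (simp add: power_mult_distrib power_divide)
  then have "M / 2 * (x^2 * (1-x)^2) / 24 \<le> M / 384"
    using M by (simp add: field_simps)
  then have "\<bar>u x\<bar> \<le> M / 384" using abs_le_hermite_remainder[OF bound x] by linarith
  moreover have "31 / 2880 * (M / 2) \<le> M / (72 * sqrt 3)"
  proof -
    have "sqrt 3 \<le> 2" by (rule real_le_lsqrt) auto
    then have "M / (72 * 2) \<le> M / (72 * sqrt 3)" using M by (intro divide_left_mono) auto
    then show ?thesis using M by simp
  qed
  then have "\<bar>u1 x\<bar> \<le> M / (72 * sqrt 3)" using abs_u1_le[OF assms(1) bound _ x] M by fastforce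
  moreover have "\<bar>u2 x\<bar> \<le> M" "\<bar>u3 x\<bar> \<le> M" using abs_derivs_le[OF bound x] M by auto
  ultimately show ?thesis using x by (simp add: D_M_def)
qed

end

section \<open>Compactness\<close>

lemma exists_grid_point_near:
  fixes x :: real and m :: nat
  assumes "x \<in> {0..1}"
  shows "\<exists>i\<le>Suc m. \<bar>x - real i / real (Suc m)\<bar> \<le> 1 / real (Suc m)"
proof -
  define i where "i = nat \<lfloor>x * real (Suc m)\<rfloor>"
  have "0 \<le> x * real (Suc m)" using assms by auto
  then have i1: "real i \<le> x * real (Suc m)" and i2: "x * real (Suc m) < real i + 1"
    by (simp_all add: i_def)
  have "x * real (Suc m) \<le> real (Suc m)" using assms by (simp add: mult_left_le_one_le)
  then have "i \<le> Suc m" using i1 by linarith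
  moreover have "x - real i / real (Suc m) = (x * real (Suc m) - real i) / real (Suc m)"
    by (simp add: field_simps)
  then have "\<bar>x - real i / real (Suc m)\<bar> \<le> 1 / real (Suc m)"
    using i1 i2 by (simp add: abs_divide divide_right_mono del: of_nat_Suc)
  ultimately show ?thesis by blast
qed

lemma subseq_converges_on_countable:
  fixes g :: "nat \<Rightarrow> 'a \<Rightarrow> 'b::metric_space" and q :: "nat \<Rightarrow> 'a"
  assumes "compact C" and "\<And>n k. g n (q k) \<in> C"
  shows "\<exists>r. strict_mono r \<and> (\<forall>k. convergent (\<lambda>n. g (r n) (q k)))"
proof -
  have "compactin (product_topology (\<lambda>_. euclidean) UNIV) (PiE UNIV (\<lambda>_::nat. C))"
    using assms(1) by (simp add: compactin_PiE)
  then have "compact (PiE UNIV (\<lambda>_::nat. C))"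
    by (simp add: euclidean_product_topology)
  then have "seq_compact (PiE UNIV (\<lambda>_::nat. C))" by (rule compact_imp_seq_compact)
  moreover have "(\<lambda>k. g n (q k)) \<in> PiE UNIV (\<lambda>_. C)" for n using assms(2) by auto
  ultimately obtain l r where r: "strict_mono r"
    and lim: "((\<lambda>n. (\<lambda>k. g n (q k))) \<circ> r) \<longlonglongrightarrow> l"
    unfolding seq_compact_def by metis
  have "(\<lambda>n. g (r n) (q k)) \<longlonglongrightarrow> l k" for k
    using continuous_on_tendsto_compose[OF continuous_on_product_coordinates lim] by auto
  then show ?thesis using r unfolding convergent_def by blast
qed

text \<open>An \<open>\<epsilon>/3\<close>-argument through the nearest point of a fine enough grid.\<close>

lemma uniformly_Cauchy_on_if_Cauchy_on_grid:
  fixes g :: "nat \<Rightarrow> real \<Rightarrow> 'b::metric_space"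
  assumes lip: "\<And>n. L-lipschitz_on {0..1} (g n)"
    and grid: "\<And>m i. i \<le> Suc m \<Longrightarrow> Cauchy (\<lambda>n. g n (real i / real (Suc m)))"
  shows "uniformly_Cauchy_on {0..1} g"
  unfolding uniformly_Cauchy_on_def
proof (intro allI impI)
  fix e :: real assume e: "e > 0"
  obtain m :: nat where "3 * (L + 1) / e < real (Suc m)"
    using reals_Archimedean2 by (metis less_Suc_eq of_nat_less_iff order_less_trans)
  then have m: "L / real (Suc m) < e / 3"
    using e by (simp add: field_simps)
  have "\<forall>i. \<exists>N. i \<le> Suc m \<longrightarrow> (\<forall>a\<ge>N. \<forall>b\<ge>N. dist (g a (real i / real (Suc m))) (g b (real i / real (Suc m))) < e/3)"
    using grid e unfolding Cauchy_def by (metis divide_pos_pos zero_less_numeral)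
  then obtain N where N: "\<And>i a b. i \<le> Suc m \<Longrightarrow> a \<ge> N i \<Longrightarrow> b \<ge> N i \<Longrightarrow>
      dist (g a (real i / real (Suc m))) (g b (real i / real (Suc m))) < e/3"
    by metis
  show "\<exists>M. \<forall>x\<in>{0..1}. \<forall>a\<ge>M. \<forall>b\<ge>M. dist (g a x) (g b x) < e"
  proof (intro exI ballI allI impI)
    fix x a b assume x: "x \<in> {0..(1::real)}" and ab: "Max (N ` {..Suc m}) \<le> a" "Max (N ` {..Suc m}) \<le> b"
    obtain i where i: "i \<le> Suc m" and xi: "\<bar>x - real i / real (Suc m)\<bar> \<le> 1 / real (Suc m)"
      using exists_grid_point_near[OF x] by blast
    define p where "p = real i / real (Suc m)"
    have p01: "p \<in> {0..1}" using i by (simp add: p_def)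
    have "L * \<bar>x - p\<bar> \<le> L / real (Suc m)"
      using mult_left_mono[OF xi lipschitz_on_nonneg[OF lip]] by (simp add: p_def)
    then have "L * \<bar>x - p\<bar> < e/3" using m by linarith
    moreover have "dist (g n x) (g n p) \<le> L * \<bar>x - p\<bar>" for n
      using lipschitz_onD[OF lip x p01] by (simp add: dist_real_def)
    ultimately have close: "dist (g n x) (g n p) < e/3" for n
      by (meson le_less_trans)
    have "N i \<le> Max (N ` {..Suc m})" using i by (intro Max_ge) auto
    then have "dist (g a p) (g b p) < e/3" using N[OF i, of a b] ab by (simp add: p_def)
    then show "dist (g a x) (g b x) < e"
      using close[of a] close[of b] dist_triangle[of "g a x" "g b x" "g a p"]
        dist_triangle[of "g a p" "g b x" "g b p"]
      by (simp add: dist_commute)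
  qed
qed

theorem arzela_ascoli_lipschitz:
  fixes g :: "nat \<Rightarrow> real \<Rightarrow> 'b::complete_space"
  assumes "compact C" and "\<And>n x. x \<in> {0..1} \<Longrightarrow> g n x \<in> C"
    and lip: "\<And>n. L-lipschitz_on {0..1} (g n)"
  shows "\<exists>r w. strict_mono r \<and> uniform_limit {0..1} (\<lambda>n. g (r n)) w sequentially"
proof -
  define q where "q k = (case prod_decode k of (i, j) \<Rightarrow> min 1 (real i / real (Suc j)))" for k
  have "q k \<in> {0..1}" for k by (auto simp: q_def split: prod.splits)
  then obtain r where r: "strict_mono r" and conv: "\<And>k. convergent (\<lambda>n. g (r n) (q k))"
    using subseq_converges_on_countable[OF assms(1), of g q] assms(2) by blast
  have "q (prod_encode (i, m)) = real i / real (Suc m)" if "i \<le> Suc m" for i m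
    using that by (simp add: q_def)
  then have "Cauchy (\<lambda>n. g (r n) (real i / real (Suc m)))" if "i \<le> Suc m" for i m
    using conv[of "prod_encode (i, m)"] that by (simp add: convergent_Cauchy)
  then have "uniformly_Cauchy_on {0..1} (\<lambda>n. g (r n))"
    using lip by (intro uniformly_Cauchy_on_if_Cauchy_on_grid) auto
  then show ?thesis
    using r Cauchy_uniformly_convergent unfolding uniformly_convergent_on_def by blast
qed

lemma lipschitz_on_Pair_add:
  assumes "L-lipschitz_on A f" and "M-lipschitz_on A g"
  shows "(L + M)-lipschitz_on A (\<lambda>a. (f a, g a))"
  by (rule lipschitz_on_mono[OF lipschitz_on_Pair[OF assms] order_refl])
    (intro sqrt_sum_squares_le_sum lipschitz_on_nonneg[OF assms(1)] lipschitz_on_nonneg[OF assms(2)])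

lemma uniform_limit_Pair:
  assumes "uniform_limit S f l F" and "uniform_limit S g m F"
  shows "uniform_limit S (\<lambda>n x. (f n x, g n x)) (\<lambda>x. (l x, m x)) F"
proof (rule uniform_limitI)
  fix e :: real assume "e > 0"
  then have "\<forall>\<^sub>F n in F. \<forall>x\<in>S. dist (f n x) (l x) < e/2"
    and "\<forall>\<^sub>F n in F. \<forall>x\<in>S. dist (g n x) (m x) < e/2"
    using uniform_limitD[OF assms(1), of "e/2"] uniform_limitD[OF assms(2), of "e/2"] by simp_all
  then show "\<forall>\<^sub>F n in F. \<forall>x\<in>S. dist (f n x, g n x) (l x, m x) < e"
  proof eventually_elim
    case (elim n)
    show ?case
    proof
      fix x assume "x \<in> S"
      then have "dist (f n x) (l x) + dist (g n x) (m x) < e" using elim by fastforce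
      then show "dist (f n x, g n x) (l x, m x) < e"
        unfolding dist_Pair_Pair
        using sqrt_sum_squares_le_sum[OF zero_le_dist[of "f n x" "l x"] zero_le_dist[of "g n x" "m x"]]
        by linarith
    qed
  qed
qed

lemma uniform_limit_fst:
  assumes "uniform_limit S f l F"
  shows "uniform_limit S (\<lambda>n x. fst (f n x)) (\<lambda>x. fst (l x)) F"
  by (rule metric_uniform_limit_imp_uniform_limit[OF assms]) (simp add: dist_fst_le)

lemma uniform_limit_snd:
  assumes "uniform_limit S f l F"
  shows "uniform_limit S (\<lambda>n x. snd (f n x)) (\<lambda>x. snd (l x)) F"
  by (rule metric_uniform_limit_imp_uniform_limit[OF assms]) (simp add: dist_snd_le)

lemma uniform_limit_has_real_derivative:
  fixes f f' :: "nat \<Rightarrow> real \<Rightarrow> real"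
  assumes deriv: "\<And>n x. x \<in> {0..1} \<Longrightarrow> (f n has_real_derivative f' n x) (at x within {0..1})"
    and lim': "uniform_limit {0..1} f' g' sequentially"
    and lim: "uniform_limit {0..1} f g sequentially"
    and x: "x \<in> {0..1}"
  shows "(g has_real_derivative g' x) (at x within {0..1})"
proof -
  have derf: "(f n has_derivative (\<lambda>h. f' n x * h)) (at x within {0..1})" if "x \<in> {0..1}" for n x
    using deriv[OF that] by (simp add: has_field_derivative_def)
  have nle: "\<forall>\<^sub>F n in sequentially. \<forall>x\<in>{0..1}. \<forall>h. norm (f' n x * h - g' x * h) \<le> e * norm h"
    if e: "e > 0" for e
    using uniform_limitD[OF lim' e]
  proof (rule eventually_mono)
    fix n assume n: "\<forall>x\<in>{0..1}. dist (f' n x) (g' x) < e"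
    show "\<forall>x\<in>{0..1}. \<forall>h. norm (f' n x * h - g' x * h) \<le> e * norm h"
    proof (intro ballI allI)
      fix x h :: real assume "x \<in> {0..1}"
      then have "\<bar>f' n x - g' x\<bar> * \<bar>h\<bar> \<le> e * \<bar>h\<bar>"
        using n by (intro mult_right_mono) (auto simp: dist_real_def less_imp_le)
      then show "norm (f' n x * h - g' x * h) \<le> e * norm h"
        by (simp add: abs_mult[symmetric] left_diff_distrib)
    qed
  qed
  have lim0: "(\<lambda>n. f n 0) \<longlonglongrightarrow> g 0" by (rule tendsto_uniform_limitI[OF lim]) simp
  obtain G where G: "\<And>y. y \<in> {0..1} \<Longrightarrow>
      (\<lambda>n. f n y) \<longlonglongrightarrow> G y \<and> (G has_derivative (\<lambda>h. g' y * h)) (at y within {0..1})"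
    using has_derivative_sequence[OF convex_real_interval(5) derf nle _ lim0] by force
  have Gg: "G y = g y" if "y \<in> {0..1}" for y
    using LIMSEQ_unique[OF conjunct1[OF G[OF that]] tendsto_uniform_limitI[OF lim that]] .
  have "(G has_derivative (\<lambda>h. g' x * h)) (at x within {0..1})" using G[OF x] by blast
  then have "(g has_derivative (\<lambda>h. g' x * h)) (at x within {0..1})"
    by (rule has_derivative_transform[OF x, rotated]) (simp add: Gg)
  then show ?thesis by (simp add: has_field_derivative_def)
qed

lemma clamped_beam_uniform_limit:
  assumes "\<And>n. clamped_beam (U0 n) (U1 n) (U2 n) (U3 n) (U4 n)"
    and "uniform_limit {0..1} U0 w0 sequentially" "uniform_limit {0..1} U1 w1 sequentially"
    "uniform_limit {0..1} U2 w2 sequentially" "uniform_limit {0..1} U3 w3 sequentially"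
    "uniform_limit {0..1} U4 w4 sequentially"
  shows "clamped_beam w0 w1 w2 w3 w4"
proof
  note beam = clamped_beam.deriv0[OF assms(1)] clamped_beam.deriv1[OF assms(1)]
    clamped_beam.deriv2[OF assms(1)] clamped_beam.deriv3[OF assms(1)]
  fix x :: real assume "x \<in> {0..1}"
  then show "(w0 has_real_derivative w1 x) (at x within {0..1})"
    "(w1 has_real_derivative w2 x) (at x within {0..1})"
    "(w2 has_real_derivative w3 x) (at x within {0..1})"
    "(w3 has_real_derivative w4 x) (at x within {0..1})"
    using assms(2-6) by (auto intro: uniform_limit_has_real_derivative beam)
next
  have "w x = 0" if "uniform_limit {0..1} V w sequentially" "\<And>n. V n x = 0" "x \<in> {0..1}"
    for V :: "nat \<Rightarrow> real \<Rightarrow> real" and w x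
    using LIMSEQ_unique[OF tendsto_uniform_limitI[OF that(1,3)]] that(2) by simp
  then show "w0 0 = 0" "w0 1 = 0" "w1 0 = 0" "w1 1 = 0"
    using assms(2,3) clamped_beam.boundary[OF assms(1)] by auto
qed

text \<open>In one dimension, \<open>near_values h G H\<close> says that each \<open>H x\<close> lies in the closed convex hull
  of the values \<open>G t\<close>, \<open>\<bar>t - x\<bar> \<le> h\<close>.\<close>

definition near_values :: "real \<Rightarrow> (real \<Rightarrow> real) \<Rightarrow> (real \<Rightarrow> real) \<Rightarrow> bool" where
  "near_values h G H \<longleftrightarrow> (\<forall>x\<in>{0..1}. \<forall>v e.
     (\<forall>t\<in>{0..1}. \<bar>t - x\<bar> \<le> h \<longrightarrow> \<bar>G t - v\<bar> \<le> e) \<longrightarrow> \<bar>H x - v\<bar> \<le> e)"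

lemma uniform_limit_near_values:
  assumes near: "\<And>n. near_values (h n) (G n) (H n)" and h: "h \<longlonglongrightarrow> 0"
    and lim: "uniform_limit {0..1} G g sequentially" and uc: "uniformly_continuous_on {0..1} g"
  shows "uniform_limit {0..1} H g sequentially"
proof (rule uniform_limitI)
  fix e :: real assume e: "e > 0"
  then obtain d where d: "d > 0" and gd: "\<And>t x. t \<in> {0..1} \<Longrightarrow> x \<in> {0..1} \<Longrightarrow> dist t x < d \<Longrightarrow> dist (g t) (g x) < e/4"
    using uc unfolding uniformly_continuous_on_def by (metis divide_pos_pos zero_less_numeral)
  have "\<forall>\<^sub>F n in sequentially. h n < d" using h d by (auto dest: order_tendstoD)
  moreover have "\<forall>\<^sub>F n in sequentially. \<forall>t\<in>{0..1}. dist (G n t) (g t) < e/4"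
    using uniform_limitD[OF lim, of "e/4"] e by simp
  ultimately show "\<forall>\<^sub>F n in sequentially. \<forall>x\<in>{0..1}. dist (H n x) (g x) < e"
  proof eventually_elim
    case (elim n)
    show ?case
    proof
      fix x :: real assume x: "x \<in> {0..1}"
      have "\<bar>G n t - g x\<bar> \<le> e/2" if "t \<in> {0..1}" "\<bar>t - x\<bar> \<le> h n" for t
      proof -
        have "dist (G n t) (g t) < e/4" using elim that by auto
        moreover have "dist (g t) (g x) < e/4" using gd[OF that(1) x] elim that by (simp add: dist_real_def)
        ultimately have "dist (G n t) (g x) < e/2"
          using dist_triangle[of "G n t" "g x" "g t"] by linarith
        then show ?thesis by (simp add: dist_real_def)
      qed
      then have "\<bar>H n x - g x\<bar> \<le> e/2" using near[of n] x unfolding near_values_def by blast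
      then show "dist (H n x) (g x) < e" using e by (simp add: dist_real_def)
    qed
  qed
qed

section \<open>Piecewise linear forcing and iterated primitives\<close>

definition hat :: "real \<Rightarrow> real" where
  "hat s = max 0 (1 - \<bar>s\<bar>)"

definition interp :: "nat \<Rightarrow> (nat \<Rightarrow> real) \<Rightarrow> real \<Rightarrow> real" where
  "interp n d x = (\<Sum>k\<le>n. d k * hat (real n * x - real k))"

lemma hat_nonneg: "0 \<le> hat s"
  by (simp add: hat_def)

lemma hat_eq_0: "1 \<le> \<bar>s\<bar> \<Longrightarrow> hat s = 0"
  by (simp add: hat_def)

lemma continuous_on_hat_affine: "continuous_on S (\<lambda>x. hat (c * x - e))"
  unfolding hat_def by (intro continuous_intros)

lemma continuous_on_interp: "continuous_on S (interp n d)"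
  unfolding interp_def[abs_def] by (intro continuous_intros continuous_on_hat_affine)

lemma sum_hat_eq_1:
  assumes n: "n > 0" and x: "x \<in> {0..1}"
  shows "(\<Sum>k\<le>n. hat (real n * x - real k)) = 1"
proof -
  define y where "y = real n * x"
  have y0: "0 \<le> y" and yn: "y \<le> real n" using x n by (auto simp: y_def mult_left_le)
  define j where "j = nat \<lfloor>y\<rfloor>"
  have jy: "real j \<le> y" "y < real j + 1" using y0 by (auto simp: j_def)
  show ?thesis
  proof (cases "j < n")
    case True
    have "hat (y - real k) = 0" if "k \<notin> {j, Suc j}" for k
      using that jy by (intro hat_eq_0) (cases "k < j"; simp; linarith)
    then have "(\<Sum>k\<le>n. hat (y - real k)) = (\<Sum>k\<in>{j, Suc j}. hat (y - real k))"
      by (intro sum.mono_neutral_right) (use True in auto)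
    also have "\<dots> = 1" using jy by (simp add: hat_def)
    finally show ?thesis by (simp add: y_def)
  next
    case False
    then have "y = real n" using jy yn by linarith
    then have "hat (y - real k) = 0" if "k \<noteq> n" "k \<le> n" for k
      using that by (intro hat_eq_0) auto
    then have "(\<Sum>k\<le>n. hat (y - real k)) = (\<Sum>k\<in>{n}. hat (y - real k))"
      by (intro sum.mono_neutral_right) auto
    also have "\<dots> = 1" using \<open>y = real n\<close> by (simp add: hat_def)
    finally show ?thesis by (simp add: y_def)
  qed
qed

lemma abs_interp_diff_le:
  assumes n: "n > 0" and x: "x \<in> {0..1}"
    and near: "\<And>k. k \<le> n \<Longrightarrow> \<bar>real n * x - real k\<bar> < 1 \<Longrightarrow> \<bar>d k - v\<bar> \<le> e"
  shows "\<bar>interp n d x - v\<bar> \<le> e"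
proof -
  have pu: "(\<Sum>k\<le>n. hat (real n * x - real k)) = 1" by (rule sum_hat_eq_1[OF n x])
  have "interp n d x - v = (\<Sum>k\<le>n. (d k - v) * hat (real n * x - real k))"
    unfolding interp_def using pu by (simp add: algebra_simps sum_subtractf sum_distrib_left[symmetric])
  also have "\<bar>\<dots>\<bar> \<le> (\<Sum>k\<le>n. e * hat (real n * x - real k))"
  proof (rule order_trans[OF sum_abs sum_mono])
    fix k assume "k \<in> {..n}"
    then show "\<bar>(d k - v) * hat (real n * x - real k)\<bar> \<le> e * hat (real n * x - real k)"
      using near[of k] hat_eq_0[of "real n * x - real k"]
      by (cases "\<bar>real n * x - real k\<bar> < 1") (auto simp: abs_mult hat_nonneg mult_right_mono)
  qed
  also have "\<dots> = e" using pu by (simp add: sum_distrib_left[symmetric])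
  finally show ?thesis .
qed

lemma abs_interp_le:
  assumes "n > 0" and "x \<in> {0..1}" and "\<And>k. k \<le> n \<Longrightarrow> \<bar>d k\<bar> \<le> B"
  shows "\<bar>interp n d x\<bar> \<le> B"
  using abs_interp_diff_le[OF assms(1,2), of d 0 B] assms(3) by simp

lemma interp_cong:
  assumes "\<And>i. i \<le> k \<Longrightarrow> d i = d' i" and "real n * x \<le> real k"
  shows "interp n d x = interp n d' x"
  unfolding interp_def
proof (rule sum.cong[OF refl])
  fix i assume "i \<in> {..n}"
  show "d i * hat (real n * x - real i) = d' i * hat (real n * x - real i)"
  proof (cases "i \<le> k")
    case False
    then have "hat (real n * x - real i) = 0" using assms(2) by (intro hat_eq_0) simp
    then show ?thesis by simp
  qed (use assms in simp)
qed

definition primitive :: "(real \<Rightarrow> real) \<Rightarrow> real \<Rightarrow> real" where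
  "primitive f x = integral {0..x} f"

lemma funpow_primitive_Suc: "(primitive ^^ Suc k) f x = integral {0..x} ((primitive ^^ k) f)"
  by (simp add: primitive_def)

lemma continuous_on_funpow_primitive:
  "continuous_on {0..1} f \<Longrightarrow> continuous_on {0..1} ((primitive ^^ k) f)"
  by (induction k)
    (auto simp: primitive_def[abs_def] intro: DERIV_continuous_on integral_has_real_derivative)

lemma funpow_primitive_has_real_derivative:
  assumes "continuous_on {0..1} f" and "x \<in> {0..1}"
  shows "((primitive ^^ Suc k) f has_real_derivative (primitive ^^ k) f x) (at x within {0..1})"
  using integral_has_real_derivative[OF continuous_on_funpow_primitive[OF assms(1)] assms(2)]
  by (simp add: primitive_def[abs_def])

lemma funpow_primitive_at_0: "(primitive ^^ Suc k) f 0 = 0"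
  by (simp add: primitive_def)

lemma abs_funpow_primitive_le:
  assumes "continuous_on {0..1} f" and "\<And>s. s \<in> {0..1} \<Longrightarrow> \<bar>f s\<bar> \<le> B" and "x \<in> {0..1}"
  shows "\<bar>(primitive ^^ k) f x\<bar> \<le> B"
  using assms(3)
proof (induction k arbitrary: x)
  case (Suc k)
  have sub: "{0..x} \<subseteq> {0..1}" using Suc.prems by auto
  have "B \<ge> 0" using assms(2)[of 0] by simp
  have "norm (integral {0..x} ((primitive ^^ k) f)) \<le> integral {0..x} (\<lambda>_. B)"
    by (intro integral_norm_bound_integral integrable_continuous_interval continuous_on_const
        continuous_on_subset[OF continuous_on_funpow_primitive[OF assms(1)] sub])
      (use Suc.IH sub in auto)
  also have "\<dots> \<le> B" using Suc.prems \<open>B \<ge> 0\<close> by (simp add: mult_left_le_one_le)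
  finally show ?case by (simp only: funpow_primitive_Suc real_norm_def)
qed (use assms(2) in simp)

lemma funpow_primitive_cong:
  assumes "0 \<le> x" and "\<And>s. s \<in> {0..x} \<Longrightarrow> f s = g s"
  shows "(primitive ^^ k) f x = (primitive ^^ k) g x"
  using assms
proof (induction k arbitrary: x)
  case (Suc k)
  have "(primitive ^^ k) f s = (primitive ^^ k) g s" if "s \<in> {0..x}" for s
    using that Suc.prems by (intro Suc.IH) auto
  then show ?case unfolding funpow_primitive_Suc by (intro integral_cong) auto
qed simp

lemma funpow_primitive_sum:
  assumes "finite I" and cont: "\<And>i. i \<in> I \<Longrightarrow> continuous_on {0..1} (\<phi> i)" and "x \<in> {0..1}"
  shows "(primitive ^^ k) (\<lambda>s. \<Sum>i\<in>I. c i * \<phi> i s) x = (\<Sum>i\<in>I. c i * (primitive ^^ k) (\<phi> i) x)"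
  using assms(3)
proof (induction k arbitrary: x)
  case (Suc k)
  have sub: "{0..x} \<subseteq> {0..1}" using Suc.prems by auto
  have "integral {0..x} ((primitive ^^ k) (\<lambda>s. \<Sum>i\<in>I. c i * \<phi> i s))
      = integral {0..x} (\<lambda>s. \<Sum>i\<in>I. c i * (primitive ^^ k) (\<phi> i) s)"
    using Suc.IH sub by (intro integral_cong) auto
  also have "\<dots> = (\<Sum>i\<in>I. c i * integral {0..x} ((primitive ^^ k) (\<phi> i)))"
    by (subst integral_sum[OF assms(1)])
      (auto intro!: integrable_continuous_interval continuous_intros
        continuous_on_subset[OF continuous_on_funpow_primitive[OF cont] sub])
  finally show ?case by (simp only: funpow_primitive_Suc)
qed simp

lemma funpow_primitive_interp:
  assumes "x \<in> {0..1}"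
  shows "(primitive ^^ k) (interp n d) x = (\<Sum>i\<le>n. d i * (primitive ^^ k) (\<lambda>s. hat (real n * s - real i)) x)"
  using funpow_primitive_sum[OF finite_atMost _ assms, where \<phi>="\<lambda>i s. hat (real n * s - real i)" and k=k and c=d]
  by (simp add: interp_def[abs_def] continuous_on_hat_affine)

section \<open>Shooting scheme\<close>

text \<open>The solution of \<open>u'''' = interp n d\<close> with \<open>u(0) = u'(0) = 0\<close>, \<open>u''(0) = a\<close>, \<open>u'''(0) = b\<close>.\<close>

definition shoot0 :: "nat \<Rightarrow> real \<Rightarrow> real \<Rightarrow> (nat \<Rightarrow> real) \<Rightarrow> real \<Rightarrow> real" where
  "shoot0 n a b d x = a * x^2 / 2 + b * x^3 / 6 + (primitive ^^ 4) (interp n d) x"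

definition shoot1 :: "nat \<Rightarrow> real \<Rightarrow> real \<Rightarrow> (nat \<Rightarrow> real) \<Rightarrow> real \<Rightarrow> real" where
  "shoot1 n a b d x = a * x + b * x^2 / 2 + (primitive ^^ 3) (interp n d) x"

definition shoot2 :: "nat \<Rightarrow> real \<Rightarrow> real \<Rightarrow> (nat \<Rightarrow> real) \<Rightarrow> real \<Rightarrow> real" where
  "shoot2 n a b d x = a + b * x + (primitive ^^ 2) (interp n d) x"

definition shoot3 :: "nat \<Rightarrow> real \<Rightarrow> real \<Rightarrow> (nat \<Rightarrow> real) \<Rightarrow> real \<Rightarrow> real" where
  "shoot3 n a b d x = b + primitive (interp n d) x"

lemma shoot_has_real_derivative:
  assumes "x \<in> {0..1}"
  shows "(shoot0 n a b d has_real_derivative shoot1 n a b d x) (at x within {0..1})"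
    "(shoot1 n a b d has_real_derivative shoot2 n a b d x) (at x within {0..1})"
    "(shoot2 n a b d has_real_derivative shoot3 n a b d x) (at x within {0..1})"
    "(shoot3 n a b d has_real_derivative interp n d x) (at x within {0..1})"
proof -
  note D = funpow_primitive_has_real_derivative[OF continuous_on_interp assms]
  have D3: "((primitive ^^ 4) (interp n d) has_real_derivative (primitive ^^ 3) (interp n d) x) (at x within {0..1})"
    and D2: "((primitive ^^ 3) (interp n d) has_real_derivative (primitive ^^ 2) (interp n d) x) (at x within {0..1})"
    and D1: "((primitive ^^ 2) (interp n d) has_real_derivative primitive (interp n d) x) (at x within {0..1})"
    and D0: "(primitive (interp n d) has_real_derivative interp n d x) (at x within {0..1})"
    using D[where k=3] D[where k=2] D[where k=1] D[where k=0] by (simp_all add: numeral_eq_Suc)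
  show "(shoot0 n a b d has_real_derivative shoot1 n a b d x) (at x within {0..1})"
    "(shoot1 n a b d has_real_derivative shoot2 n a b d x) (at x within {0..1})"
    "(shoot2 n a b d has_real_derivative shoot3 n a b d x) (at x within {0..1})"
    "(shoot3 n a b d has_real_derivative interp n d x) (at x within {0..1})"
    unfolding shoot0_def[abs_def] shoot1_def[abs_def] shoot2_def[abs_def] shoot3_def[abs_def]
    by (rule derivative_eq_intros D3 D2 D1 D0 refl | simp add: power2_eq_square power3_eq_cube algebra_simps)+
qed

lemma shoot_at_0: "shoot0 n a b d 0 = 0" "shoot1 n a b d 0 = 0" "shoot2 n a b d 0 = a" "shoot3 n a b d 0 = b"
  using funpow_primitive_at_0[of 3] funpow_primitive_at_0[of 2] funpow_primitive_at_0[of 1]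
    funpow_primitive_at_0[of 0]
  by (simp_all add: shoot0_def shoot1_def shoot2_def shoot3_def numeral_eq_Suc)

lemma shoot_cong:
  assumes "\<And>i. i \<le> k \<Longrightarrow> d i = d' i" and "0 \<le> x" and "real n * x \<le> real k"
  shows "shoot0 n a b d x = shoot0 n a b d' x" "shoot1 n a b d x = shoot1 n a b d' x"
    "shoot2 n a b d x = shoot2 n a b d' x" "shoot3 n a b d x = shoot3 n a b d' x"
proof -
  have "interp n d s = interp n d' s" if "s \<in> {0..x}" for s
  proof (rule interp_cong[OF assms(1)])
    show "real n * s \<le> real k"
      using that assms(3) mult_left_mono[of s x "real n"] by auto
  qed
  then have "(primitive ^^ j) (interp n d) x = (primitive ^^ j) (interp n d') x" for j
    by (rule funpow_primitive_cong[OF assms(2)])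
  from this[of 4] this[of 3] this[of 2] this[of 1]
  show "shoot0 n a b d x = shoot0 n a b d' x" "shoot1 n a b d x = shoot1 n a b d' x"
    "shoot2 n a b d x = shoot2 n a b d' x" "shoot3 n a b d x = shoot3 n a b d' x"
    by (simp_all add: shoot0_def shoot1_def shoot2_def shoot3_def)
qed

lemma continuous_on_shoot:
  assumes "\<And>i. continuous_on S (\<lambda>p. D p i)" "continuous_on S A" "continuous_on S B"
    and x: "x \<in> {0..1}"
  shows "continuous_on S (\<lambda>p. shoot0 n (A p) (B p) (D p) x)"
    "continuous_on S (\<lambda>p. shoot1 n (A p) (B p) (D p) x)"
    "continuous_on S (\<lambda>p. shoot2 n (A p) (B p) (D p) x)"
    "continuous_on S (\<lambda>p. shoot3 n (A p) (B p) (D p) x)"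
proof -
  have P: "continuous_on S (\<lambda>p. (primitive ^^ j) (interp n (D p)) x)" for j
    by (simp only: funpow_primitive_interp[OF x]) (intro continuous_intros assms)
  from P[of 4] P[of 3] P[of 2] P[of 1]
  show "continuous_on S (\<lambda>p. shoot0 n (A p) (B p) (D p) x)"
    "continuous_on S (\<lambda>p. shoot1 n (A p) (B p) (D p) x)"
    "continuous_on S (\<lambda>p. shoot2 n (A p) (B p) (D p) x)"
    "continuous_on S (\<lambda>p. shoot3 n (A p) (B p) (D p) x)"
    unfolding shoot0_def shoot1_def shoot2_def shoot3_def
    by (auto intro!: continuous_intros assms)
qed

text \<open>A causal discretisation of \<open>u'''' = F (x, u, u', u'', u''')\<close>: the value at node \<open>k + 1\<close>
  is \<open>F\<close> evaluated at node \<open>k\<close> along the solution driven by the values at nodes \<open>0, \<dots>, k\<close>. The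
  nodal values therefore depend continuously on the two free parameters \<open>a = u''(0)\<close> and
  \<open>b = u'''(0)\<close>, which Brouwer's theorem in the plane can adjust to \<open>u(1) = u'(1) = 0\<close>.
  Nodes are clipped at \<open>n\<close> so that all of them lie in \<open>[0,1]\<close>.\<close>

definition node :: "nat \<Rightarrow> nat \<Rightarrow> real" where
  "node n k = real (min k n) / real n"

primrec scheme_upto ::
  "(real \<times> real \<times> real \<times> real \<times> real \<Rightarrow> real) \<Rightarrow> nat \<Rightarrow> real \<Rightarrow> real \<Rightarrow> nat \<Rightarrow> nat \<Rightarrow> real" where
  "scheme_upto F n a b 0 = (\<lambda>_. F (0, 0, 0, a, b))"
| "scheme_upto F n a b (Suc k) = (scheme_upto F n a b k)(Suc k := F (node n k,
     shoot0 n a b (scheme_upto F n a b k) (node n k), shoot1 n a b (scheme_upto F n a b k) (node n k),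
     shoot2 n a b (scheme_upto F n a b k) (node n k), shoot3 n a b (scheme_upto F n a b k) (node n k)))"

definition scheme ::
  "(real \<times> real \<times> real \<times> real \<times> real \<Rightarrow> real) \<Rightarrow> nat \<Rightarrow> real \<Rightarrow> real \<Rightarrow> nat \<Rightarrow> real" where
  "scheme F n a b k = scheme_upto F n a b k k"

lemma node_in_01: "node n k \<in> {0..1}"
  by (cases "n = 0") (auto simp: node_def divide_le_eq_1)

lemma scheme_upto_eq_scheme: "i \<le> k \<Longrightarrow> scheme_upto F n a b k i = scheme F n a b i"
  by (induction k) (auto simp: scheme_def le_Suc_eq)

lemma scheme_0: "scheme F n a b 0 = F (0, 0, 0, a, b)"
  by (simp add: scheme_def)

lemma scheme_Suc:
  assumes "k < n"
  defines "t \<equiv> real k / real n"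
  shows "scheme F n a b (Suc k) = F (t, shoot0 n a b (scheme F n a b) t, shoot1 n a b (scheme F n a b) t,
    shoot2 n a b (scheme F n a b) t, shoot3 n a b (scheme F n a b) t)"
proof -
  have "node n k = t" using assms by (simp add: node_def t_def)
  moreover have "real n * t \<le> real k" using assms by (simp add: t_def)
  then have "shoot0 n a b (scheme_upto F n a b k) t = shoot0 n a b (scheme F n a b) t"
    "shoot1 n a b (scheme_upto F n a b k) t = shoot1 n a b (scheme F n a b) t"
    "shoot2 n a b (scheme_upto F n a b k) t = shoot2 n a b (scheme F n a b) t"
    "shoot3 n a b (scheme_upto F n a b k) t = shoot3 n a b (scheme F n a b) t"
    by (intro shoot_cong scheme_upto_eq_scheme; simp add: t_def)+
  ultimately show ?thesis by (simp add: scheme_def[of F n a b "Suc k"])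
qed

lemma abs_scheme_le: "(\<And>q. \<bar>F q\<bar> \<le> K) \<Longrightarrow> \<bar>scheme F n a b i\<bar> \<le> K"
proof -
  assume "\<And>q. \<bar>F q\<bar> \<le> K"
  then have "\<bar>scheme_upto F n a b k i\<bar> \<le> K" for k by (induction k arbitrary: i) auto
  then show ?thesis by (simp add: scheme_def)
qed

lemma continuous_on_scheme:
  assumes F: "continuous_on UNIV F"
  shows "continuous_on UNIV (\<lambda>p. scheme F n (fst p) (snd p) i)"
proof -
  have "continuous_on UNIV (\<lambda>p. scheme_upto F n (fst p) (snd p) k i)" for k
  proof (induction k arbitrary: i)
    case 0
    show ?case by (simp, intro continuous_on_compose2[OF F] continuous_intros) auto
  next
    case (Suc k)
    have "continuous_on UNIV fst" "continuous_on UNIV snd"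
      by (intro continuous_intros)+
    note shoot = continuous_on_shoot[where D="\<lambda>p. scheme_upto F n (fst p) (snd p) k",
        OF Suc.IH this node_in_01]
    show ?case
    proof (cases "i = Suc k")
      case True
      have "continuous_on UNIV (\<lambda>p. F (node n k,
          shoot0 n (fst p) (snd p) (scheme_upto F n (fst p) (snd p) k) (node n k),
          shoot1 n (fst p) (snd p) (scheme_upto F n (fst p) (snd p) k) (node n k),
          shoot2 n (fst p) (snd p) (scheme_upto F n (fst p) (snd p) k) (node n k),
          shoot3 n (fst p) (snd p) (scheme_upto F n (fst p) (snd p) k) (node n k)))"
        by (intro continuous_on_compose2[OF F] continuous_intros shoot) auto
      then show ?thesis using True by simp
    qed (use Suc.IH in simp)
  qed
  then show ?thesis by (simp add: scheme_def)
qed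

text \<open>The map sends \<open>(a, b)\<close> to \<open>(2 Z\<^sub>3 - 6 Z\<^sub>4, 12 Z\<^sub>4 - 6 Z\<^sub>3)\<close>, where \<open>Z\<^sub>j\<close> is the \<open>j\<close>-fold primitive
  of the forcing at \<open>1\<close>; since \<open>u(1) = a/2 + b/6 + Z\<^sub>4\<close> and \<open>u'(1) = a + b/2 + Z\<^sub>3\<close>, its fixed points
  are exactly the parameters meeting the boundary conditions at \<open>1\<close>.\<close>

lemma exists_shooting_parameters:
  assumes F: "continuous_on UNIV F" and bound: "\<And>q. \<bar>F q\<bar> \<le> K" and n: "n > 0"
  shows "\<exists>a b. shoot0 n a b (scheme F n a b) 1 = 0 \<and> shoot1 n a b (scheme F n a b) 1 = 0"
proof -
  have one: "(1::real) \<in> {0..1}" by simp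
  define Z where "Z j p = (primitive ^^ j) (interp n (scheme F n (fst p) (snd p))) 1" for j p
  define T where "T p = (2 * Z 3 p - 6 * Z 4 p, 12 * Z 4 p - 6 * Z 3 p)" for p
  define S where "S = {-18 * K..18 * K} \<times> {-18 * K..18 * K}"
  have "continuous_on UNIV (\<lambda>p. Z j p)" for j
    unfolding Z_def funpow_primitive_interp[OF one]
    by (intro continuous_on_sum continuous_on_mult continuous_on_const continuous_on_scheme[OF F])
  then have "continuous_on S (\<lambda>p. Z j p)" for j
    by (rule continuous_on_subset) simp
  then have cont: "continuous_on S T"
    unfolding T_def by (intro continuous_intros)
  have Z: "\<bar>Z j p\<bar> \<le> K" for j p
    unfolding Z_def using abs_scheme_le[OF bound] n
    by (intro abs_funpow_primitive_le[OF continuous_on_interp _ one] abs_interp_le) auto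
  have "T p \<in> S" for p
    using Z[of 3 p] Z[of 4 p] by (auto simp: T_def S_def abs_le_iff)
  then have "T \<in> S \<rightarrow> S" by blast
  moreover have "compact S" "convex S" "S \<noteq> {}"
    using bound[of 0] unfolding S_def by (auto intro!: compact_Times convex_Times)
  ultimately obtain p where "T p = p" using brouwer[of S T] cont by blast
  then have "fst p = 2 * Z 3 p - 6 * Z 4 p" "snd p = 12 * Z 4 p - 6 * Z 3 p"
    by (auto simp: T_def prod_eq_iff)
  then have "shoot0 n (fst p) (snd p) (scheme F n (fst p) (snd p)) 1 = 0"
    "shoot1 n (fst p) (snd p) (scheme F n (fst p) (snd p)) 1 = 0"
    unfolding shoot0_def shoot1_def power_one mult_1_right Z_def by linarith+
  then show ?thesis by blast
qed

lemma near_values_scheme: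
  fixes F :: "real \<times> real \<times> real \<times> real \<times> real \<Rightarrow> real" and a b :: real
  assumes n: "n > 0"
  defines "d \<equiv> scheme F n a b"
  shows "near_values (2 / real n)
    (\<lambda>t. F (t, shoot0 n a b d t, shoot1 n a b d t, shoot2 n a b d t, shoot3 n a b d t)) (interp n d)"
  unfolding near_values_def
proof (intro ballI allI impI)
  fix x v e :: real
  assume x: "x \<in> {0..1}" and near: "\<forall>t\<in>{0..1}. \<bar>t - x\<bar> \<le> 2 / real n \<longrightarrow>
      \<bar>F (t, shoot0 n a b d t, shoot1 n a b d t, shoot2 n a b d t, shoot3 n a b d t) - v\<bar> \<le> e"
  show "\<bar>interp n d x - v\<bar> \<le> e"
  proof (rule abs_interp_diff_le[OF n x])
    fix k assume k: "k \<le> n" and kx: "\<bar>real n * x - real k\<bar> < 1"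
    show "\<bar>d k - v\<bar> \<le> e"
    proof (cases k)
      case 0
      then have "x \<le> 2 / real n" using kx n by (simp add: field_simps)
      then show ?thesis using near[rule_format, of 0] 0 x by (simp add: d_def scheme_0 shoot_at_0)
    next
      case (Suc j)
      have "\<bar>real j - real n * x\<bar> \<le> 2" using kx Suc by simp
      then have "\<bar>real j / real n - x\<bar> \<le> 2 / real n"
        using n by (simp add: field_simps abs_divide[symmetric] divide_right_mono)
      moreover have "real j / real n \<in> {0..1}" using k Suc by auto
      ultimately show ?thesis
        using near Suc k by (simp add: d_def scheme_Suc)
    qed
  qed
qed

lemma clamped_beam_shoot:
  assumes "shoot0 n a b d 1 = 0" and "shoot1 n a b d 1 = 0"
  shows "clamped_beam (shoot0 n a b d) (shoot1 n a b d) (shoot2 n a b d) (shoot3 n a b d) (interp n d)"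
  using shoot_has_real_derivative shoot_at_0 assms by unfold_locales auto

lemma approximate_solutions:
  fixes F :: "real \<times> real \<times> real \<times> real \<times> real \<Rightarrow> real"
  assumes F: "continuous_on UNIV F" and bound: "\<And>q. \<bar>F q\<bar> \<le> K"
  shows "\<exists>U0 U1 U2 U3 H. \<forall>m. clamped_beam (U0 m) (U1 m) (U2 m) (U3 m) (H m) \<and>
    (\<forall>x\<in>{0..1}. \<bar>H m x\<bar> \<le> K) \<and>
    near_values (2 / real (Suc m)) (\<lambda>t. F (t, U0 m t, U1 m t, U2 m t, U3 m t)) (H m)"
proof -
  obtain a b where ab: "\<And>m. shoot0 (Suc m) (a m) (b m) (scheme F (Suc m) (a m) (b m)) 1 = 0 \<and>
      shoot1 (Suc m) (a m) (b m) (scheme F (Suc m) (a m) (b m)) 1 = 0"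
    using exists_shooting_parameters[OF F bound zero_less_Suc] by metis
  define d where "d m = scheme F (Suc m) (a m) (b m)" for m
  define U0 U1 U2 U3 H where "U0 m = shoot0 (Suc m) (a m) (b m) (d m)" "U1 m = shoot1 (Suc m) (a m) (b m) (d m)"
    "U2 m = shoot2 (Suc m) (a m) (b m) (d m)" "U3 m = shoot3 (Suc m) (a m) (b m) (d m)"
    "H m = interp (Suc m) (d m)" for m
  have "clamped_beam (U0 m) (U1 m) (U2 m) (U3 m) (H m)" for m
    using clamped_beam_shoot ab by (simp add: U0_U1_U2_U3_H_def d_def)
  moreover have "\<bar>H m x\<bar> \<le> K" if "x \<in> {0..1}" for m x
    using abs_interp_le[OF zero_less_Suc that] abs_scheme_le[OF bound] by (simp add: U0_U1_U2_U3_H_def d_def)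
  moreover have "near_values (2 / real (Suc m)) (\<lambda>t. F (t, U0 m t, U1 m t, U2 m t, U3 m t)) (H m)" for m
    using near_values_scheme[OF zero_less_Suc] by (simp add: U0_U1_U2_U3_H_def d_def)
  ultimately show ?thesis by blast
qed

lemma clamped_beam_subseq_uniform_limit:
  fixes U0 U1 U2 U3 H :: "nat \<Rightarrow> real \<Rightarrow> real"
  assumes beam: "\<And>m. clamped_beam (U0 m) (U1 m) (U2 m) (U3 m) (H m)"
    and H: "\<And>m x. x \<in> {0..1} \<Longrightarrow> \<bar>H m x\<bar> \<le> K"
  shows "\<exists>r w0 w1 w2 w3. strict_mono r \<and>
    uniform_limit {0..1} (\<lambda>m. U0 (r m)) w0 sequentially \<and> uniform_limit {0..1} (\<lambda>m. U1 (r m)) w1 sequentially \<and>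
    uniform_limit {0..1} (\<lambda>m. U2 (r m)) w2 sequentially \<and> uniform_limit {0..1} (\<lambda>m. U3 (r m)) w3 sequentially"
proof -
  have K: "0 \<le> K" using H[of 0 0] by simp
  define V where "V m t = (U0 m t, U1 m t, U2 m t, U3 m t)" for m t
  have "V m x \<in> {-K..K} \<times> {-K..K} \<times> {-K..K} \<times> {-K..K}" if "x \<in> {0..1}" for m x
    using clamped_beam.abs_derivs_le[OF beam[of m] H[where m=m] that] by (simp add: V_def abs_le_iff)
  moreover have "(K + (K + (K + K)))-lipschitz_on {0..1} (V m)" for m
  proof -
    have b: "\<bar>U1 m x\<bar> \<le> K" "\<bar>U2 m x\<bar> \<le> K" "\<bar>U3 m x\<bar> \<le> K" if "x \<in> {0..1}" for x
      using clamped_beam.abs_derivs_le[OF beam[of m] H[where m=m] that] by auto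
    note lip = bounded_real_derivative_imp_lipschitz[OF _ convex_real_interval(5) _ K]
    have "K-lipschitz_on {0..1} (U0 m)" "K-lipschitz_on {0..1} (U1 m)"
      "K-lipschitz_on {0..1} (U2 m)" "K-lipschitz_on {0..1} (U3 m)"
      by (rule lip[OF clamped_beam.deriv0[OF beam[of m]] b(1)] lip[OF clamped_beam.deriv1[OF beam[of m]] b(2)]
          lip[OF clamped_beam.deriv2[OF beam[of m]] b(3)] lip[OF clamped_beam.deriv3[OF beam[of m]] H[where m=m]];
          assumption)+
    then show ?thesis unfolding V_def by (intro lipschitz_on_Pair_add)
  qed
  ultimately obtain r w where r: "strict_mono r" and lim: "uniform_limit {0..1} (\<lambda>m. V (r m)) w sequentially"
    using arzela_ascoli_lipschitz[of "{-K..K} \<times> {-K..K} \<times> {-K..K} \<times> {-K..K}" V]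
    by (metis compact_Icc compact_Times)
  have "uniform_limit {0..1} (\<lambda>m. U0 (r m)) (\<lambda>t. fst (w t)) sequentially"
    using uniform_limit_fst[OF lim] by (simp add: V_def)
  moreover have "uniform_limit {0..1} (\<lambda>m. U1 (r m)) (\<lambda>t. fst (snd (w t))) sequentially"
    using uniform_limit_fst[OF uniform_limit_snd[OF lim]] by (simp add: V_def)
  moreover have "uniform_limit {0..1} (\<lambda>m. U2 (r m)) (\<lambda>t. fst (snd (snd (w t)))) sequentially"
    using uniform_limit_fst[OF uniform_limit_snd[OF uniform_limit_snd[OF lim]]] by (simp add: V_def)
  moreover have "uniform_limit {0..1} (\<lambda>m. U3 (r m)) (\<lambda>t. snd (snd (snd (w t)))) sequentially"
    using uniform_limit_snd[OF uniform_limit_snd[OF uniform_limit_snd[OF lim]]] by (simp add: V_def)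
  ultimately show ?thesis using r by blast
qed

text \<open>The approximate forcings \<open>H\<close> converge to \<open>F\<close> along the limit because they are local
  averages of \<open>F\<close> along the approximants.\<close>

theorem clamped_beam_exists:
  fixes F :: "real \<times> real \<times> real \<times> real \<times> real \<Rightarrow> real"
  assumes uc: "uniformly_continuous_on UNIV F" and bound: "\<And>q. \<bar>F q\<bar> \<le> K"
  shows "\<exists>u u1 u2 u3 u4. clamped_beam u u1 u2 u3 u4 \<and> continuous_on {0..1} u4 \<and>
           (\<forall>x\<in>{0..1}. u4 x = F (x, u x, u1 x, u2 x, u3 x))"
proof -
  have F: "continuous_on UNIV F" using uc by (rule uniformly_continuous_imp_continuous)
  obtain U0 U1 U2 U3 H where "\<forall>m. clamped_beam (U0 m) (U1 m) (U2 m) (U3 m) (H m) \<and>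
      (\<forall>x\<in>{0..1}. \<bar>H m x\<bar> \<le> K) \<and>
      near_values (2 / real (Suc m)) (\<lambda>t. F (t, U0 m t, U1 m t, U2 m t, U3 m t)) (H m)"
    using approximate_solutions[OF F bound] by blast
  then have beam: "\<And>m. clamped_beam (U0 m) (U1 m) (U2 m) (U3 m) (H m)"
    and H: "\<And>m x. x \<in> {0..1} \<Longrightarrow> \<bar>H m x\<bar> \<le> K"
    and near: "\<And>m. near_values (2 / real (Suc m)) (\<lambda>t. F (t, U0 m t, U1 m t, U2 m t, U3 m t)) (H m)"
    by blast+
  obtain r w0 w1 w2 w3 where r: "strict_mono r"
    and lim: "uniform_limit {0..1} (\<lambda>m. U0 (r m)) w0 sequentially" "uniform_limit {0..1} (\<lambda>m. U1 (r m)) w1 sequentially"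
      "uniform_limit {0..1} (\<lambda>m. U2 (r m)) w2 sequentially" "uniform_limit {0..1} (\<lambda>m. U3 (r m)) w3 sequentially"
    using clamped_beam_subseq_uniform_limit[of U0 U1 U2 U3 H K, OF beam H] by blast
  define g where "g t = F (t, w0 t, w1 t, w2 t, w3 t)" for t
  have "continuous_on {0..1} w" if "uniform_limit {0..1} (\<lambda>m. V (r m)) w sequentially"
    and "\<And>m. continuous_on {0..1} (V m)" for V :: "nat \<Rightarrow> real \<Rightarrow> real" and w
    using that by (intro uniform_limit_theorem[OF _ that(1)]) auto
  then have "continuous_on {0..1} w0" "continuous_on {0..1} w1" "continuous_on {0..1} w2" "continuous_on {0..1} w3"
    using lim clamped_beam.continuous_on_derivs[OF beam] by blast+
  then have "continuous_on {0..1} g"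
    unfolding g_def by (intro continuous_on_compose2[OF F] continuous_intros) auto
  then have uc_g: "uniformly_continuous_on {0..1} g" by (intro compact_uniformly_continuous) auto
  have lim_F: "uniform_limit {0..1} (\<lambda>m t. F (t, U0 (r m) t, U1 (r m) t, U2 (r m) t, U3 (r m) t)) g sequentially"
    using uniform_limit_compose[OF uniform_limit_Pair[OF uniform_limit_const[where c="\<lambda>t. t"]
        uniform_limit_Pair[OF lim(1) uniform_limit_Pair[OF lim(2) uniform_limit_Pair[OF lim(3,4)]]]] uc]
    by (simp add: g_def[abs_def] o_def)
  have h: "(\<lambda>m. 2 / real (Suc (r m))) \<longlonglongrightarrow> 0"
    using LIMSEQ_subseq_LIMSEQ[OF LIMSEQ_Suc[OF lim_const_over_n[of 2]] r] by (simp add: o_def)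
  have "uniform_limit {0..1} (\<lambda>m. H (r m)) g sequentially"
    by (rule uniform_limit_near_values[OF near h lim_F uc_g])
  with beam lim have "clamped_beam w0 w1 w2 w3 g"
    by (rule clamped_beam_uniform_limit)
  then show ?thesis
    using \<open>continuous_on {0..1} g\<close> unfolding g_def by blast
qed

lemma uniformly_continuous_on_clamp:
  fixes f :: "'a::euclidean_space \<Rightarrow> 'b::metric_space"
  assumes "continuous_on (cbox a b) f" and ne: "cbox a b \<noteq> {}"
  shows "uniformly_continuous_on UNIV (\<lambda>x. f (clamp a b x))"
  unfolding uniformly_continuous_on_def
proof (intro allI impI)
  fix e :: real assume "e > 0"
  moreover have "uniformly_continuous_on (cbox a b) f"
    using assms(1) by (rule compact_uniformly_continuous) simp
  ultimately obtain d where "d > 0" and d: "\<And>x x'. x \<in> cbox a b \<Longrightarrow> x' \<in> cbox a b \<Longrightarrow>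
      dist x' x < d \<Longrightarrow> dist (f x') (f x) < e"
    unfolding uniformly_continuous_on_def by metis
  have "clamp a b x \<in> cbox a b" for x using ne by (simp add: box_ne_empty)
  then show "\<exists>d>0. \<forall>x\<in>UNIV. \<forall>x'\<in>UNIV. dist x' x < d \<longrightarrow> dist (f (clamp a b x')) (f (clamp a b x)) < e"
    using \<open>d > 0\<close> by (intro exI[of _ d]) (auto intro!: d le_less_trans[OF dist_clamps_le_dist_args])
qed

lemma D_M_eq_cbox:
  "D_M M = cbox (0, - M / 384, - M / (72 * sqrt 3), - M, - M) (1, M / 384, M / (72 * sqrt 3), M, M)"
  by (auto simp: D_M_def cbox_Pair_eq abs_le_iff)

theorem lemma1:
  fixes f :: "real \<Rightarrow> real \<Rightarrow> real \<Rightarrow> real \<Rightarrow> real \<Rightarrow> real" and M :: real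
  assumes cont: "continuous_on ({0..1} \<times> UNIV) (\<lambda>(x,u,y,v,z). f x u y v z)"
    and Mpos: "M > 0"
    and bound: "\<forall>(x,u,y,v,z)\<in>D_M M. \<bar>f x u y v z\<bar> \<le> M / 2"
  shows "\<exists>u u1 u2 u3 u4. C4_with_derivs u u1 u2 u3 u4 \<and>
           (\<forall>x\<in>{0<..<1}. u4 x = f x (u x) (u1 x) (u2 x) (u3 x)) \<and>
           u 0 = 0 \<and> u 1 = 0 \<and> u1 0 = 0 \<and> u1 1 = 0"
proof -
  define g :: "real \<times> real \<times> real \<times> real \<times> real \<Rightarrow> real" where "g = (\<lambda>(x,u,y,v,z). f x u y v z)"
  obtain lo hi where box: "D_M M = cbox lo hi" using D_M_eq_cbox by blast
  have "(0, 0, 0, 0, 0) \<in> D_M M" using Mpos by (simp add: D_M_def)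
  then have ne: "cbox lo hi \<noteq> {}" using box by blast
  have "continuous_on (cbox lo hi) g"
    unfolding g_def by (rule continuous_on_subset[OF cont]) (auto simp: box[symmetric] D_M_def)
  then have uc: "uniformly_continuous_on UNIV (\<lambda>q. g (clamp lo hi q))"
    using ne by (rule uniformly_continuous_on_clamp)
  have "\<bar>g q\<bar> \<le> M / 2" if "q \<in> cbox lo hi" for q
    using bound that box unfolding g_def by (cases q rule: prod_cases5) auto
  moreover have "clamp lo hi q \<in> cbox lo hi" for q using ne by (simp add: box_ne_empty)
  ultimately have g_bound: "\<bar>g (clamp lo hi q)\<bar> \<le> M / 2" for q by blast
  obtain u u1 u2 u3 u4 where beam: "clamped_beam u u1 u2 u3 u4" and c4: "continuous_on {0..1} u4"
    and eq: "\<And>x. x \<in> {0..1} \<Longrightarrow> u4 x = g (clamp lo hi (x, u x, u1 x, u2 x, u3 x))"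
    using clamped_beam_exists[OF uc g_bound] by blast
  have "(x, u x, u1 x, u2 x, u3 x) \<in> cbox lo hi" if "x \<in> {0..1}" for x
    using clamped_beam.jet_in_D_M[OF beam c4 _ Mpos that] eq g_bound box by simp
  then have "\<forall>x\<in>{0<..<1}. u4 x = f x (u x) (u1 x) (u2 x) (u3 x)" by (simp add: eq g_def)
  moreover have "C4_with_derivs u u1 u2 u3 u4"
    using c4 clamped_beam.deriv0[OF beam] clamped_beam.deriv1[OF beam] clamped_beam.deriv2[OF beam]
      clamped_beam.deriv3[OF beam] unfolding C4_with_derivs_def by blast
  ultimately show ?thesis using clamped_beam.boundary[OF beam] by blast
qed

end
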